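(* Let $n\ge2$ and $S=(a_1,\dots,a_n)$ with all $a_i$ positive integers. Define $\bar S=(L/a_1,\dots,L/a_n)$ where $L=\mathrm{lcm}(S)$. Then: (a) $\bar S$ is normal and $\overline{(\bar S)}$ is the normalization of $S$. (b) $J^*(\bar S)=J(S)$ and $J^*(S)=J(\bar S)$. (c) $\mathrm{type}(\bar S)=\mathrm{cotype}(S)$ and $\mathrm{type}(S)=\mathrm{cotype}(\bar S)$.
   Context: For $S=(a_1,\dots,a_n)\in\mathbb{Z}^n$: $S$ is normal if $\gcd(S)=1$; if $S\neq 0$ its normalization is $(a_1/d,\dots,a_n/d)$ with $d=\gcd(S)$. $S_i$ denotes $S$ with the $i$-th entry omitted. $J^*(S)=\{i\in\{1,\dots,n\}:\gcd(S_i)\neq\gcd(S)\}$, $J(S)=\{i:\mathrm{lcm}(S_i)\neq\mathrm{lcm}(S)\}=\{i: a_i\nmid\mathrm{lcm}(S_i)\}$, $\mathrm{type}(S)=|J^*(S)|$, $\mathrm{cotype}(S)=|J(S)|$. By convention gcd and lcm are nonnegative. *)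

theory Defs
  imports Main
begin

text \<open>A tuple S = (a_1,...,a_n) in Z^n is represented as an int list of length n.
  Indices are 0-based: position i of the list is the entry a_(i+1).\<close>

definition gcdS :: "int list \<Rightarrow> int" where
  "gcdS S = Gcd (set S)"

definition lcmS :: "int list \<Rightarrow> int" where
  "lcmS S = Lcm (set S)"

definition normal :: "int list \<Rightarrow> bool" where
  "normal S \<longleftrightarrow> gcdS S = 1"

definition normalization :: "int list \<Rightarrow> int list" where
  "normalization S = map (\<lambda>a. a div gcdS S) S"

definition omit :: "int list \<Rightarrow> nat \<Rightarrow> int list" where
  "omit S i = take i S @ drop (Suc i) S"

definition Jstar :: "int list \<Rightarrow> nat set" where
  "Jstar S = {i. i < length S \<and> gcdS (omit S i) \<noteq> gcdS S}"

definition J :: "int list \<Rightarrow> nat set" where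
  "J S = {i. i < length S \<and> lcmS (omit S i) \<noteq> lcmS S}"

definition type :: "int list \<Rightarrow> nat" where
  "type S = card (Jstar S)"

definition cotype :: "int list \<Rightarrow> nat" where
  "cotype S = card (J S)"

definition bar :: "int list \<Rightarrow> int list" where
  "bar S = map (\<lambda>a. lcmS S div a) S"

end

theory Submission
  imports Defs
begin

text \<open>For a nonzero L, the map a \<mapsto> L/a reverses divisibility among the divisors of L and is an
  involution on them, so it exchanges gcd and lcm: for a nonempty set A of divisors of L,
  gcd {L/a | a \<in> A} = L / lcm A and lcm {L/a | a \<in> A} = L / gcd A.
  With L = lcm S this gives gcd (bar S) = 1 and lcm (bar S) = lcm S / gcd S, and since
  omitting an entry commutes with bar, it also turns gcd (bar S)_i and lcm (bar S)_i into
  L / lcm S_i and L / gcd S_i. Injectivity of a \<mapsto> L/a then identifies the index sets.\<close>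

lemma Gcd_image_div:
  fixes L :: "'a::semiring_Gcd"
  assumes "A \<noteq> {}" and "L \<noteq> 0" and dvd: "\<And>a. a \<in> A \<Longrightarrow> a dvd L"
  shows "Gcd ((\<lambda>a. L div a) ` A) = normalize (L div Lcm A)"
proof (rule Gcd_eqI)
  have "Lcm A dvd L" using dvd by (simp add: Lcm_least)
  moreover from this have "Lcm A \<noteq> 0" using \<open>L \<noteq> 0\<close> by auto
  ultimately have dvd_quotient_iff: "c dvd L div Lcm A \<longleftrightarrow> c * Lcm A dvd L" for c
    by (simp add: dvd_div_iff_mult)
  show "normalize (normalize (L div Lcm A)) = normalize (L div Lcm A)" by simp
  show "normalize (L div Lcm A) dvd b" if "b \<in> (\<lambda>a. L div a) ` A" for b
  proof -
    obtain a where a: "a \<in> A" "b = L div a" using \<open>b \<in> _\<close> by blast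
    have "(L div Lcm A) * a dvd (L div Lcm A) * Lcm A"
      by (rule mult_dvd_mono[OF dvd_refl dvd_Lcm[OF a(1)]])
    also have "\<dots> = L" using \<open>Lcm A dvd L\<close> by simp
    finally have "L div Lcm A dvd L div a"
      using dvd[OF a(1)] \<open>L \<noteq> 0\<close> by (subst dvd_div_iff_mult) auto
    then show ?thesis using a by simp
  qed
  show "c dvd normalize (L div Lcm A)" if "\<And>b. b \<in> (\<lambda>a. L div a) ` A \<Longrightarrow> c dvd b" for c
  proof -
    have "c * a dvd L" if "a \<in> A" for a
    proof -
      have "a dvd L" and "a \<noteq> 0" using dvd[OF that] \<open>L \<noteq> 0\<close> by auto
      then show ?thesis
        using \<open>\<And>b. _ \<Longrightarrow> c dvd b\<close>[of "L div a"] that by (simp add: dvd_div_iff_mult)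
    qed
    then have "Lcm ((*) c ` A) dvd L" by (auto intro: Lcm_least)
    then have "c * Lcm A dvd L" using Lcm_mult[OF \<open>A \<noteq> {}\<close>] by simp
    then show ?thesis by (simp add: dvd_quotient_iff)
  qed
qed

lemma div_dvd_iff_dvd_mult:
  fixes a :: "'a::algebraic_semidom"
  assumes "b dvd a" and "b \<noteq> 0"
  shows "a div b dvd c \<longleftrightarrow> a dvd c * b"
  using assms by (metis dvd_div_mult_self dvd_times_right_cancel_iff)

lemma Lcm_image_div:
  fixes L :: "'a::semiring_Gcd"
  assumes "A \<noteq> {}" and "L \<noteq> 0" and dvd: "\<And>a. a \<in> A \<Longrightarrow> a dvd L"
  shows "Lcm ((\<lambda>a. L div a) ` A) = normalize (L div Gcd A)"
proof (rule Lcm_eqI)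
  obtain a0 where "a0 \<in> A" using \<open>A \<noteq> {}\<close> by blast
  then have "Gcd A dvd L" using dvd dvd_trans Gcd_dvd by blast
  have "Gcd A \<noteq> 0"
    using \<open>a0 \<in> A\<close> dvd[of a0] \<open>L \<noteq> 0\<close> Gcd_0_iff[of A] by auto
  show "normalize (normalize (L div Gcd A)) = normalize (L div Gcd A)" by simp
  show "b dvd normalize (L div Gcd A)" if "b \<in> (\<lambda>a. L div a) ` A" for b
  proof -
    obtain a where a: "a \<in> A" "b = L div a" using \<open>b \<in> _\<close> by blast
    have "(L div a) * Gcd A dvd (L div a) * a"
      by (rule mult_dvd_mono[OF dvd_refl Gcd_dvd[OF a(1)]])
    also have "\<dots> = L" using dvd[OF a(1)] by simp
    finally have "L div a dvd L div Gcd A"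
      using \<open>Gcd A dvd L\<close> \<open>Gcd A \<noteq> 0\<close> by (simp add: dvd_div_iff_mult)
    then show ?thesis using a by simp
  qed
  show "normalize (L div Gcd A) dvd c" if "\<And>b. b \<in> (\<lambda>a. L div a) ` A \<Longrightarrow> b dvd c" for c
  proof -
    have "L dvd c * a" if "a \<in> A" for a
    proof -
      have "a dvd L" and "a \<noteq> 0" using dvd[OF that] \<open>L \<noteq> 0\<close> by auto
      then show ?thesis
        using \<open>\<And>b. _ \<Longrightarrow> b dvd c\<close>[of "L div a"] that by (simp add: div_dvd_iff_dvd_mult)
    qed
    then have "L dvd Gcd ((*) c ` A)" by (auto intro: Gcd_greatest)
    then have "L dvd c * Gcd A" by (simp add: Gcd_mult)
    then show ?thesis
      using \<open>Gcd A dvd L\<close> \<open>Gcd A \<noteq> 0\<close> by (simp add: div_dvd_iff_dvd_mult)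
  qed
qed

lemma div_div_self:
  fixes L :: "'a::algebraic_semidom"
  assumes "a dvd L" and "L \<noteq> 0"
  shows "L div (L div a) = a"
proof -
  obtain k where "L = a * k" using assms(1) by blast
  with assms(2) show ?thesis by simp
qed

lemma div_eq_div_iff_of_dvd:
  fixes L :: "'a::algebraic_semidom"
  assumes "a dvd L" and "b dvd L" and "L \<noteq> 0"
  shows "L div a = L div b \<longleftrightarrow> a = b"
  by (metis assms div_div_self)

lemma div_div_div_same_numerator:
  fixes L :: "'a::algebraic_semidom"
  assumes "g dvd a" and "a dvd L" and "L \<noteq> 0"
  shows "(L div g) div (L div a) = a div g"
proof -
  obtain m where a: "a = g * m" using assms(1) by blast
  obtain k where L: "L = a * k" using assms(2) by blast
  have "a \<noteq> 0" and "g \<noteq> 0" and "k \<noteq> 0" using assms(3) a L by auto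
  have "L div a = k" using L \<open>a \<noteq> 0\<close> by simp
  moreover have "L div g = m * k" and "a div g = m"
    using L \<open>g \<noteq> 0\<close> by (simp_all add: a ac_simps)
  ultimately show ?thesis using \<open>k \<noteq> 0\<close> by simp
qed

lemma lcmS_pos:
  assumes "0 \<notin> set S"
  shows "0 < lcmS S"
proof -
  have "lcmS S \<noteq> 0" using assms by (simp add: lcmS_def Lcm_0_iff)
  moreover have "0 \<le> lcmS S" by (simp add: lcmS_def)
  ultimately show ?thesis by simp
qed

lemma dvd_lcmS: "a \<in> set S \<Longrightarrow> a dvd lcmS S"
  unfolding lcmS_def by simp

lemma gcdS_map_div:
  assumes "T \<noteq> []" and "0 < L" and "\<forall>a\<in>set T. a dvd L"
  shows "gcdS (map (\<lambda>a. L div a) T) = L div lcmS T"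
proof -
  have "0 \<le> L div lcmS T" using \<open>0 < L\<close> by (simp add: lcmS_def div_int_pos_iff)
  then show ?thesis
    using Gcd_image_div[of "set T" L] assms by (simp add: gcdS_def lcmS_def)
qed

lemma lcmS_map_div:
  assumes "T \<noteq> []" and "0 < L" and "\<forall>a\<in>set T. a dvd L"
  shows "lcmS (map (\<lambda>a. L div a) T) = L div gcdS T"
proof -
  have "0 \<le> L div gcdS T" using \<open>0 < L\<close> by (simp add: gcdS_def div_int_pos_iff)
  then show ?thesis
    using Lcm_image_div[of "set T" L] assms by (simp add: gcdS_def lcmS_def)
qed

lemma omit_map: "omit (map f S) i = map f (omit S i)"
  unfolding omit_def by (simp add: take_map drop_map)

lemma set_omit_subset: "set (omit S i) \<subseteq> set S"
  unfolding omit_def using set_take_subset set_drop_subset by fastforce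

lemma omit_ne_Nil: "2 \<le> length S \<Longrightarrow> omit S i \<noteq> []"
  unfolding omit_def by auto

lemma gcdS_dvd_lcmS: "T \<noteq> [] \<Longrightarrow> gcdS T dvd lcmS T"
  unfolding gcdS_def lcmS_def by (metis Gcd_dvd dvd_Lcm dvd_trans last_in_set)

lemma lcmS_omit_dvd: "lcmS (omit S i) dvd lcmS S"
  unfolding lcmS_def by (rule Lcm_subset[OF set_omit_subset])

lemma dvd_lcmS_of_mem_omit: "a \<in> set (omit S i) \<Longrightarrow> a dvd lcmS S"
  using dvd_lcmS lcmS_omit_dvd dvd_trans by blast

lemma omit_bar: "omit (bar S) i = map (\<lambda>a. lcmS S div a) (omit S i)"
  unfolding bar_def by (rule omit_map)

lemma gcdS_bar:
  assumes "S \<noteq> []" and "0 \<notin> set S"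
  shows "gcdS (bar S) = 1"
  using gcdS_map_div[OF assms(1) lcmS_pos[OF assms(2)]] lcmS_pos[OF assms(2)]
  by (simp add: bar_def dvd_lcmS)

lemma lcmS_bar:
  assumes "S \<noteq> []" and "0 \<notin> set S"
  shows "lcmS (bar S) = lcmS S div gcdS S"
  using lcmS_map_div[OF assms(1) lcmS_pos[OF assms(2)]] by (simp add: bar_def dvd_lcmS)

lemma bar_bar:
  assumes "S \<noteq> []" and "0 \<notin> set S"
  shows "bar (bar S) = normalization S"
proof -
  have "(lcmS S div gcdS S) div (lcmS S div a) = a div gcdS S" if "a \<in> set S" for a
    using that lcmS_pos[OF assms(2)]
    by (intro div_div_div_same_numerator) (simp_all add: gcdS_def dvd_lcmS)
  then show ?thesis
    unfolding bar_def[of "bar S"] lcmS_bar[OF assms] normalization_def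
    by (simp add: bar_def)
qed

lemma Jstar_bar:
  assumes "2 \<le> length S" and "0 \<notin> set S"
  shows "Jstar (bar S) = J S"
proof -
  let ?L = "lcmS S"
  have "?L \<noteq> 0" using lcmS_pos[OF assms(2)] by simp
  have "gcdS (omit (bar S) i) = ?L div lcmS (omit S i)" for i
    unfolding omit_bar using omit_ne_Nil[OF assms(1)] lcmS_pos[OF assms(2)]
    by (intro gcdS_map_div) (simp_all add: dvd_lcmS_of_mem_omit)
  moreover have "gcdS (bar S) = ?L div ?L"
    using gcdS_bar[of S] assms \<open>?L \<noteq> 0\<close> by fastforce
  ultimately have "gcdS (omit (bar S) i) = gcdS (bar S) \<longleftrightarrow> lcmS (omit S i) = ?L" for i
    using div_eq_div_iff_of_dvd[OF lcmS_omit_dvd dvd_refl \<open>?L \<noteq> 0\<close>] by simp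
  then show ?thesis by (simp add: Jstar_def J_def bar_def)
qed

lemma J_bar:
  assumes "2 \<le> length S" and "0 \<notin> set S"
  shows "J (bar S) = Jstar S"
proof -
  let ?L = "lcmS S"
  have "?L \<noteq> 0" using lcmS_pos[OF assms(2)] by simp
  have "lcmS (omit (bar S) i) = ?L div gcdS (omit S i)" for i
    unfolding omit_bar using omit_ne_Nil[OF assms(1)] lcmS_pos[OF assms(2)]
    by (intro lcmS_map_div) (simp_all add: dvd_lcmS_of_mem_omit)
  moreover have "lcmS (bar S) = ?L div gcdS S"
    using lcmS_bar[of S] assms by fastforce
  moreover have "gcdS (omit S i) dvd ?L" for i
    using gcdS_dvd_lcmS[OF omit_ne_Nil[OF assms(1)]] lcmS_omit_dvd by (rule dvd_trans)
  moreover have "gcdS S dvd ?L"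
    using gcdS_dvd_lcmS[of S] assms(1) by fastforce
  ultimately have "lcmS (omit (bar S) i) = lcmS (bar S) \<longleftrightarrow> gcdS (omit S i) = gcdS S" for i
    using div_eq_div_iff_of_dvd[OF _ _ \<open>?L \<noteq> 0\<close>] by simp
  then show ?thesis by (simp add: Jstar_def J_def bar_def)
qed

theorem lemma4p2:
  fixes S :: "int list"
  assumes "length S \<ge> 2"
    and "\<forall>a\<in>set S. a > 0"
  shows "(normal (bar S) \<and> bar (bar S) = normalization S)
       \<and> (Jstar (bar S) = J S \<and> Jstar S = J (bar S))
       \<and> (type (bar S) = cotype S \<and> type S = cotype (bar S))"
proof -
  have "0 \<notin> set S" using assms(2) by auto
  moreover have "S \<noteq> []" using assms(1) by auto
  ultimately show ?thesis
    using assms(1) gcdS_bar bar_bar Jstar_bar J_bar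
    by (simp add: normal_def type_def cotype_def)
qed

end
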